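(* Let $N>0$; all statements below concern $\tau\in(0,1)$. (i) There exists a unique $\tau_1^{(1)}\in(\frac12,\frac1{\sqrt2})$ such that $\beta_2^*(\tau)-\tau\beta_1^{**}(\tau)=2$ holds if and only if $\tau=\tau_1^{(1)}$; equivalently, [$\beta_2^*(\tau)=\underline\beta_2(\tau)$ and $\beta_1^{**}(\tau)=\overline\beta_1(\tau)$] holds if and only if $\tau=\tau_1^{(1)}$. More precisely, $\beta_2^*(\tau)-\tau\beta_1^{**}(\tau)>2$ if and only if $\tau\in(0,\tau_1^{(1)})$, and $0<\beta_1^{**}(\tau)<\overline\beta_1(\tau)$ for all $\tau\in(0,1)\setminus\{\tau_1^{(1)}\}$. (ii) There exists a unique $\tau_1^{(2)}\in(\frac12,\frac1{\sqrt2})$ such that $\beta_1^*(\tau)-\tau\beta_2^{**}(\tau)=2(N+1)$ holds if and only if $\tau=\tau_1^{(2)}$; equivalently, [$\beta_1^*(\tau)=\underline\beta_1(\tau)$ and $\beta_2^{**}(\tau)=\overline\beta_2(\tau)$] holds if and only if $\tau=\tau_1^{(2)}$. More precisely, $\beta_1^*(\tau)-\tau\beta_2^{**}(\tau)>2(N+1)$ if and only if $\tau\in(0,\tau_1^{(2)})$, and $0<\beta_2^{**}(\tau)<\overline\beta_2(\tau)$ for all $\tau\in(0,1)\setminus\{\tau_1^{(2)}\}$. Moreover $\frac12<\tau_1^{(2)}<\tau_1^{(1)}<\frac1{\sqrt2}$.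
   Context: With $D=(N+1)^2+2\tau(N+1)+1$: $$\underline\beta_1(\tau)=\tfrac{2}{1-\tau^2}(N+1+\tau+\tau\sqrt D),\qquad \overline\beta_1(\tau)=\tfrac{2}{1-\tau^2}(N+1+\tau+\sqrt D),$$ $$\underline\beta_2(\tau)=\tfrac{2}{1-\tau^2}(1+\tau(N+1)+\tau\sqrt D),\qquad \overline\beta_2(\tau)=\tfrac{2}{1-\tau^2}(1+\tau(N+1)+\sqrt D);$$ $$\beta_1^*(\tau)=4(N+1)+8\tau,\quad \beta_2^*(\tau)=4+8\tau(N+1),\quad \beta_1^{**}(\tau)=8\tau(1+2\tau(N+1)),\quad \beta_2^{**}(\tau)=8\tau(N+1+2\tau).$$ *)

theory Defs
  imports Complex_Main
begin

definition DD :: "nat \<Rightarrow> real \<Rightarrow> real" where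
  "DD N \<tau> = (real N + 1)^2 + 2 * \<tau> * (real N + 1) + 1"

definition beta1_low :: "nat \<Rightarrow> real \<Rightarrow> real" where
  "beta1_low N \<tau> = 2 / (1 - \<tau>^2) * (real N + 1 + \<tau> + \<tau> * sqrt (DD N \<tau>))"

definition beta1_up :: "nat \<Rightarrow> real \<Rightarrow> real" where
  "beta1_up N \<tau> = 2 / (1 - \<tau>^2) * (real N + 1 + \<tau> + sqrt (DD N \<tau>))"

definition beta2_low :: "nat \<Rightarrow> real \<Rightarrow> real" where
  "beta2_low N \<tau> = 2 / (1 - \<tau>^2) * (1 + \<tau> * (real N + 1) + \<tau> * sqrt (DD N \<tau>))"

definition beta2_up :: "nat \<Rightarrow> real \<Rightarrow> real" where
  "beta2_up N \<tau> = 2 / (1 - \<tau>^2) * (1 + \<tau> * (real N + 1) + sqrt (DD N \<tau>))"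

definition beta1_star :: "nat \<Rightarrow> real \<Rightarrow> real" where
  "beta1_star N \<tau> = 4 * (real N + 1) + 8 * \<tau>"

definition beta2_star :: "nat \<Rightarrow> real \<Rightarrow> real" where
  "beta2_star N \<tau> = 4 + 8 * \<tau> * (real N + 1)"

definition beta1_sstar :: "nat \<Rightarrow> real \<Rightarrow> real" where
  "beta1_sstar N \<tau> = 8 * \<tau> * (1 + 2 * \<tau> * (real N + 1))"

definition beta2_sstar :: "nat \<Rightarrow> real \<Rightarrow> real" where
  "beta2_sstar N \<tau> = 8 * \<tau> * (real N + 1 + 2 * \<tau>)"

end

theory Submission
  imports Defs
begin

text \<open>Both parts concern the cubic \<open>F a b \<tau> = crossing_poly a b \<tau> = a (1 - 4\<tau>\<^sup>2) + 4 b \<tau> (1 - 2\<tau>\<^sup>2)\<close>, with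
  \<open>(a, b) = (1, N + 1)\<close> for (i) and \<open>(a, b) = (N + 1, 1)\<close> for (ii).  The threshold
  quantity is \<open>\<beta>\<^sup>* - \<tau> \<beta>\<^sup>*\<^sup>* = 2a + 2F\<close>.  Writing \<open>\<beta>\<^sup>*\<^sup>* = 2 (b + \<tau> a + h) / (1 - \<tau>\<^sup>2)\<close>, the
  upper bound has the same shape with \<open>\<surd>D\<close> in place of \<open>h\<close>, and \<open>D - h\<^sup>2 = (1 - \<tau>\<^sup>2) F\<^sup>2\<close>;
  so \<open>\<beta>\<^sup>*\<^sup>*\<close> stays below the upper bound and meets it exactly where \<open>F = 0\<close>, which is
  also where \<open>\<beta>\<^sup>*\<close> meets the lower bound.  \<open>F\<close> is positive on \<open>(0, 1/2]\<close>, equals \<open>-a\<close>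
  at \<open>1/\<surd>2\<close> and decreases strictly on \<open>[1/2, \<infinity>)\<close>, hence has a single zero in
  \<open>(0, 1)\<close>.  The zeros are ordered because
  \<open>F 1 M \<tau> - F M 1 \<tau> = (M - 1) (4\<tau>\<^sup>2 - 1 + 4\<tau> (1 - 2\<tau>\<^sup>2)) > 0\<close> between \<open>1/2\<close> and \<open>1/\<surd>2\<close>.\<close>

lemma inv_sqrt2_le_iff_half_le_square:
  fixes x :: real
  assumes "0 \<le> x"
  shows "1 / sqrt 2 \<le> x \<longleftrightarrow> 1/2 \<le> x\<^sup>2"
proof -
  have "1 / sqrt 2 \<le> x \<longleftrightarrow> sqrt (1/2) \<le> sqrt (x\<^sup>2)"
    using assms by (simp add: real_sqrt_divide)
  also have "\<dots> \<longleftrightarrow> 1/2 \<le> x\<^sup>2" by (rule real_sqrt_le_iff)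
  finally show ?thesis .
qed

lemma half_less_inv_sqrt2: "1/2 < 1 / sqrt (2::real)"
proof -
  have "sqrt 2 < (2::real)" by (rule real_less_lsqrt) auto
  then show ?thesis by (simp add: field_simps)
qed

lemma inv_sqrt2_less_one: "1 / sqrt 2 < (1::real)"
  by (simp add: field_simps)

lemma strict_antimono_on_sign_change:
  fixes g :: "real \<Rightarrow> real"
  assumes "lo < l" "l < u" "continuous_on {l..u} g"
    and pos: "\<And>x. lo < x \<Longrightarrow> x \<le> l \<Longrightarrow> 0 < g x"
    and "g u < 0"
    and dec: "strict_antimono_on {l..} g"
  obtains t where "l < t" "t < u"
    "\<forall>x\<in>{lo<..}. g x = 0 \<longleftrightarrow> x = t" "\<forall>x\<in>{lo<..}. 0 < g x \<longleftrightarrow> x < t"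
proof -
  have "0 < g l" using pos \<open>lo < l\<close> by simp
  obtain t where t: "l \<le> t" "t \<le> u" "g t = 0"
    using IVT2'[of g u 0 l] assms \<open>0 < g l\<close> by auto
  have "l < t" using t \<open>0 < g l\<close> by (cases "t = l") auto
  have "t < u" using t \<open>g u < 0\<close> by (cases "t = u") auto
  have "(g x = 0 \<longleftrightarrow> x = t) \<and> (0 < g x \<longleftrightarrow> x < t)" if "lo < x" for x
  proof (cases "x \<le> l")
    case True
    then show ?thesis using pos[OF that] \<open>l < t\<close> by auto
  next
    case False
    then consider "x < t" | "x = t" | "t < x" by linarith
    then show ?thesis
    proof cases
      case 1
      then show ?thesis using monotone_onD[OF dec, of x t] False t by auto
    next
      case 3
      then show ?thesis using monotone_onD[OF dec, of t x] False t by auto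
    qed (use t in auto)
  qed
  then show ?thesis using that \<open>l < t\<close> \<open>t < u\<close> by blast
qed

definition crossing_poly :: "real \<Rightarrow> real \<Rightarrow> real \<Rightarrow> real" where
  "crossing_poly a b \<tau> = a * (1 - 4 * \<tau>\<^sup>2) + 4 * b * \<tau> * (1 - 2 * \<tau>\<^sup>2)"

lemma crossing_poly_pos:
  assumes "0 \<le> a" "0 < b" "0 < \<tau>" "\<tau> \<le> 1/2"
  shows "0 < crossing_poly a b \<tau>"
proof -
  have "\<tau>\<^sup>2 \<le> (1/2)\<^sup>2" using assms by (intro power_mono) auto
  then have "0 \<le> a * (1 - 4 * \<tau>\<^sup>2)" "0 < 4 * b * \<tau> * (1 - 2 * \<tau>\<^sup>2)"
    using assms by (auto simp: power2_eq_square)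
  then show ?thesis unfolding crossing_poly_def by linarith
qed

lemma crossing_poly_inv_sqrt2: "crossing_poly a b (1 / sqrt 2) = - a"
  by (simp add: crossing_poly_def power_divide)

lemma crossing_poly_diff:
  "crossing_poly a b x - crossing_poly a b y
     = (y - x) * (4 * a * (x + y) + 8 * b * (x\<^sup>2 + x * y + y\<^sup>2) - 4 * b)"
  by (simp add: crossing_poly_def algebra_simps power2_eq_square)

lemma crossing_poly_strict_antimono:
  assumes "0 \<le> a" "0 < b"
  shows "strict_antimono_on {1/2..} (crossing_poly a b)"
proof (rule monotone_onI)
  fix x y :: real
  assume "x \<in> {1/2..}" "y \<in> {1/2..}" "x < y"
  then have "1/2 \<le> x" "x < y" by auto
  then have "1/4 \<le> x\<^sup>2" "1/4 \<le> x * y" "1/4 \<le> y\<^sup>2"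
    using mult_mono[of "1/2" x "1/2" x] mult_mono[of "1/2" x "1/2" y] mult_mono[of "1/2" y "1/2" y]
    by (auto simp: power2_eq_square)
  then have "6 * b \<le> 8 * b * (x\<^sup>2 + x * y + y\<^sup>2)"
    using mult_left_mono[of "3/4" "x\<^sup>2 + x * y + y\<^sup>2" "8 * b"] assms by simp
  moreover have "0 \<le> 4 * a * (x + y)" using assms \<open>1/2 \<le> x\<close> \<open>x < y\<close> by simp
  ultimately have "0 < 4 * a * (x + y) + 8 * b * (x\<^sup>2 + x * y + y\<^sup>2) - 4 * b"
    using assms by linarith
  then have "0 < (y - x) * (4 * a * (x + y) + 8 * b * (x\<^sup>2 + x * y + y\<^sup>2) - 4 * b)"
    using \<open>x < y\<close> by simp
  then show "crossing_poly a b y < crossing_poly a b x"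
    using crossing_poly_diff[of a b x y] by linarith
qed

lemma crossing_poly_unique_zero:
  assumes "0 < a" "0 < b"
  obtains t where "1/2 < t" "t < 1 / sqrt 2"
    "\<forall>\<tau>\<in>{0<..}. crossing_poly a b \<tau> = 0 \<longleftrightarrow> \<tau> = t"
    "\<forall>\<tau>\<in>{0<..}. 0 < crossing_poly a b \<tau> \<longleftrightarrow> \<tau> < t"
proof -
  have "continuous_on {1/2..1 / sqrt 2} (crossing_poly a b)"
    unfolding crossing_poly_def by (intro continuous_intros)
  moreover have "crossing_poly a b (1 / sqrt 2) < 0"
    using assms by (simp add: crossing_poly_inv_sqrt2)
  ultimately show ?thesis
    using strict_antimono_on_sign_change[of 0 "1/2" "1 / sqrt 2" "crossing_poly a b"]
      that half_less_inv_sqrt2 crossing_poly_pos[of a b] crossing_poly_strict_antimono[of a b] assms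
    by auto
qed

lemma crossing_poly_swap_pos:
  assumes "a < b" "1/2 < t" "t < 1 / sqrt 2"
  shows "crossing_poly b a t < crossing_poly a b t"
proof -
  have "t\<^sup>2 < 1/2"
    using assms inv_sqrt2_le_iff_half_le_square[of t] by (simp add: not_le[symmetric])
  moreover have "1/4 < t\<^sup>2"
    using mult_strict_mono[of "1/2" t "1/2" t] assms by (simp add: power2_eq_square)
  moreover have "0 < 4 * t * (1 - 2 * t\<^sup>2)"
    using assms \<open>t\<^sup>2 < 1/2\<close> by (intro mult_pos_pos) auto
  ultimately have "0 < (4 * t\<^sup>2 - 1) + 4 * t * (1 - 2 * t\<^sup>2)" by linarith
  then have "0 < (b - a) * ((4 * t\<^sup>2 - 1) + 4 * t * (1 - 2 * t\<^sup>2))"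
    using assms by simp
  moreover have "crossing_poly a b t - crossing_poly b a t
      = (b - a) * ((4 * t\<^sup>2 - 1) + 4 * t * (1 - 2 * t\<^sup>2))"
    by (simp add: crossing_poly_def algebra_simps)
  ultimately show ?thesis by linarith
qed

definition disc :: "real \<Rightarrow> real \<Rightarrow> real \<Rightarrow> real" where
  "disc a b \<tau> = a\<^sup>2 + 2 * \<tau> * a * b + b\<^sup>2"

definition beta_star :: "real \<Rightarrow> real \<Rightarrow> real \<Rightarrow> real" where
  "beta_star a b \<tau> = 4 * a + 8 * \<tau> * b"

definition beta_sstar :: "real \<Rightarrow> real \<Rightarrow> real \<Rightarrow> real" where
  "beta_sstar a b \<tau> = 8 * \<tau> * (a + 2 * \<tau> * b)"

definition beta_low :: "real \<Rightarrow> real \<Rightarrow> real \<Rightarrow> real" where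
  "beta_low a b \<tau> = 2 / (1 - \<tau>\<^sup>2) * (a + \<tau> * b + \<tau> * sqrt (disc a b \<tau>))"

definition beta_up :: "real \<Rightarrow> real \<Rightarrow> real \<Rightarrow> real" where
  "beta_up a b \<tau> = 2 / (1 - \<tau>\<^sup>2) * (b + \<tau> * a + sqrt (disc a b \<tau>))"

text \<open>The term that takes the place of \<open>sqrt (disc a b \<tau>)\<close> when \<open>beta_sstar\<close> is written in
  the shape of \<open>beta_up\<close>.\<close>

definition sstar_sqrt_part :: "real \<Rightarrow> real \<Rightarrow> real \<Rightarrow> real" where
  "sstar_sqrt_part a b \<tau> = 4 * \<tau> * (a + 2 * \<tau> * b) * (1 - \<tau>\<^sup>2) - b - \<tau> * a"

lemma beta_star_minus_sstar:
  "beta_star a b \<tau> - \<tau> * beta_sstar a b \<tau> = 2 * a + 2 * crossing_poly a b \<tau>"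
  by (simp add: beta_star_def beta_sstar_def crossing_poly_def algebra_simps power2_eq_square)

lemma beta_sstar_eq:
  assumes "\<tau>\<^sup>2 \<noteq> 1"
  shows "beta_sstar a b \<tau> = 2 / (1 - \<tau>\<^sup>2) * (b + \<tau> * a + sstar_sqrt_part a b \<tau>)"
  using assms by (simp add: beta_sstar_def sstar_sqrt_part_def field_simps)

lemma beta_star_eq:
  assumes "\<tau>\<^sup>2 \<noteq> 1"
  shows "beta_star a b \<tau> = 2 / (1 - \<tau>\<^sup>2) * (3/2 * a + 2 * b * \<tau> + crossing_poly a b \<tau> / 2)"
  using assms by (simp add: beta_star_def crossing_poly_def field_simps power2_eq_square)

lemma disc_minus_sstar_sqrt_part:
  "disc a b \<tau> - (sstar_sqrt_part a b \<tau>)\<^sup>2 = (1 - \<tau>\<^sup>2) * (crossing_poly a b \<tau>)\<^sup>2"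
  by (simp add: disc_def sstar_sqrt_part_def crossing_poly_def algebra_simps power2_eq_square)

lemma tau_times_sstar_sqrt_part:
  "\<tau> * sstar_sqrt_part a b \<tau> = a / 2 + b * \<tau> + crossing_poly a b \<tau> * (\<tau>\<^sup>2 - 1/2)"
  by (simp add: sstar_sqrt_part_def crossing_poly_def algebra_simps power2_eq_square)

lemma square_less_one:
  fixes \<tau> :: real
  assumes "0 < \<tau>" "\<tau> < 1"
  shows "\<tau>\<^sup>2 < 1"
  using assms by (simp add: power_less_one_iff)

lemma sqrt_disc_eq_sstar_sqrt_part:
  assumes "0 < a" "0 < b" "0 < \<tau>" "crossing_poly a b \<tau> = 0"
  shows "sqrt (disc a b \<tau>) = sstar_sqrt_part a b \<tau>"
proof (rule real_sqrt_unique)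
  have "0 < \<tau> * sstar_sqrt_part a b \<tau>"
    using assms by (simp add: tau_times_sstar_sqrt_part add_pos_pos)
  then show "0 \<le> sstar_sqrt_part a b \<tau>"
    using assms by (simp add: zero_less_mult_iff)
  show "(sstar_sqrt_part a b \<tau>)\<^sup>2 = disc a b \<tau>"
    using disc_minus_sstar_sqrt_part[of a b \<tau>] assms by simp
qed

lemma beta_sstar_less_up:
  assumes "0 < \<tau>" "\<tau> < 1" "crossing_poly a b \<tau> \<noteq> 0"
  shows "beta_sstar a b \<tau> < beta_up a b \<tau>"
proof -
  have "\<tau>\<^sup>2 < 1" using assms(1,2) by (rule square_less_one)
  then have "0 < (1 - \<tau>\<^sup>2) * (crossing_poly a b \<tau>)\<^sup>2" using assms by simp
  then have "(sstar_sqrt_part a b \<tau>)\<^sup>2 < disc a b \<tau>"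
    using disc_minus_sstar_sqrt_part[of a b \<tau>] by linarith
  then have "sstar_sqrt_part a b \<tau> < sqrt (disc a b \<tau>)" by (rule real_less_rsqrt)
  then show ?thesis
    using \<open>\<tau>\<^sup>2 < 1\<close> by (simp add: beta_sstar_eq beta_up_def divide_strict_right_mono)
qed

lemma beta_sstar_eq_up_iff:
  assumes "0 < a" "0 < b" "0 < \<tau>" "\<tau> < 1"
  shows "beta_sstar a b \<tau> = beta_up a b \<tau> \<longleftrightarrow> crossing_poly a b \<tau> = 0"
proof
  assume "crossing_poly a b \<tau> = 0"
  then show "beta_sstar a b \<tau> = beta_up a b \<tau>"
    using assms square_less_one[of \<tau>]
    by (simp add: beta_sstar_eq beta_up_def sqrt_disc_eq_sstar_sqrt_part)
qed (use beta_sstar_less_up assms in fastforce)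

lemma beta_star_eq_low:
  assumes "0 < a" "0 < b" "0 < \<tau>" "\<tau> < 1" "crossing_poly a b \<tau> = 0"
  shows "beta_star a b \<tau> = beta_low a b \<tau>"
proof -
  have "a + \<tau> * b + \<tau> * sqrt (disc a b \<tau>) = 3/2 * a + 2 * b * \<tau>"
    using assms tau_times_sstar_sqrt_part[of \<tau> a b] by (simp add: sqrt_disc_eq_sstar_sqrt_part)
  then show ?thesis
    using assms square_less_one[of \<tau>] by (simp add: beta_star_eq beta_low_def)
qed

lemma beta_sstar_pos:
  assumes "0 \<le> a" "0 < b" "0 < \<tau>"
  shows "0 < beta_sstar a b \<tau>"
  using assms by (simp add: beta_sstar_def add_nonneg_pos)

definition is_crossing_threshold :: "real \<Rightarrow> real \<Rightarrow> real \<Rightarrow> bool" where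
  "is_crossing_threshold a b t \<longleftrightarrow> 1/2 < t \<and> t < 1 / sqrt 2 \<and>
    (\<forall>\<tau>\<in>{0<..<1}. beta_star a b \<tau> - \<tau> * beta_sstar a b \<tau> = 2 * a \<longleftrightarrow> \<tau> = t) \<and>
    (\<forall>\<tau>\<in>{0<..<1}. (beta_star a b \<tau> = beta_low a b \<tau> \<and> beta_sstar a b \<tau> = beta_up a b \<tau>)
        \<longleftrightarrow> \<tau> = t) \<and>
    (\<forall>\<tau>\<in>{0<..<1}. beta_star a b \<tau> - \<tau> * beta_sstar a b \<tau> > 2 * a \<longleftrightarrow> \<tau> < t) \<and>
    (\<forall>\<tau>\<in>{0<..<1} - {t}. 0 < beta_sstar a b \<tau> \<and> beta_sstar a b \<tau> < beta_up a b \<tau>)"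

lemma crossing_threshold_exists:
  assumes "0 < a" "0 < b"
  obtains t where "is_crossing_threshold a b t"
proof -
  obtain t where t: "1/2 < t" "t < 1 / sqrt 2"
    and zero: "\<forall>\<tau>\<in>{0<..}. crossing_poly a b \<tau> = 0 \<longleftrightarrow> \<tau> = t"
    and sign: "\<forall>\<tau>\<in>{0<..}. 0 < crossing_poly a b \<tau> \<longleftrightarrow> \<tau> < t"
    using crossing_poly_unique_zero assms by blast
  have "is_crossing_threshold a b t"
    unfolding is_crossing_threshold_def
    using t zero sign assms
    by (auto simp: beta_star_minus_sstar beta_sstar_eq_up_iff
        beta_star_eq_low beta_sstar_pos beta_sstar_less_up)
  then show ?thesis by (rule that)
qed

lemma crossing_threshold_order:
  assumes "0 < a" "a < b" "is_crossing_threshold a b t1" "is_crossing_threshold b a t2"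
  shows "t2 < t1"
proof -
  have t2: "1/2 < t2" "t2 < 1 / sqrt 2"
    using assms(4) by (simp_all add: is_crossing_threshold_def)
  then have "0 < t2" "t2 < 1" using inv_sqrt2_less_one by linarith+
  then have "crossing_poly b a t2 = 0"
    using assms(4) by (simp add: is_crossing_threshold_def beta_star_minus_sstar)
  then have "2 * a < beta_star a b t2 - t2 * beta_sstar a b t2"
    using crossing_poly_swap_pos[OF \<open>a < b\<close> t2] by (simp add: beta_star_minus_sstar)
  then show ?thesis
    using assms(3) \<open>0 < t2\<close> \<open>t2 < 1\<close> by (simp add: is_crossing_threshold_def)
qed

lemma DD_eq_disc:
  "DD N = disc 1 (real N + 1)" "DD N = disc (real N + 1) 1"
  by (auto simp: fun_eq_iff DD_def disc_def algebra_simps power2_eq_square)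

lemma betas_part_i:
  "beta2_star N = beta_star 1 (real N + 1)" "beta1_sstar N = beta_sstar 1 (real N + 1)"
  "beta2_low N = beta_low 1 (real N + 1)" "beta1_up N = beta_up 1 (real N + 1)"
  by (auto simp: fun_eq_iff beta2_star_def beta_star_def beta1_sstar_def beta_sstar_def
      beta2_low_def beta_low_def beta1_up_def beta_up_def DD_eq_disc(1) algebra_simps)

lemma betas_part_ii:
  "beta1_star N = beta_star (real N + 1) 1" "beta2_sstar N = beta_sstar (real N + 1) 1"
  "beta1_low N = beta_low (real N + 1) 1" "beta2_up N = beta_up (real N + 1) 1"
  by (auto simp: fun_eq_iff beta1_star_def beta_star_def beta2_sstar_def beta_sstar_def
      beta1_low_def beta_low_def beta2_up_def beta_up_def DD_eq_disc(2) algebra_simps)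

theorem mainTheorem13:
  fixes N :: nat
  assumes "N > 0"
  shows "\<exists>t1 t2 :: real.
    \<comment> \<open>(i)\<close>
    1/2 < t1 \<and> t1 < 1 / sqrt 2 \<and>
    (\<forall>\<tau>\<in>{0<..<1}. beta2_star N \<tau> - \<tau> * beta1_sstar N \<tau> = 2 \<longleftrightarrow> \<tau> = t1) \<and>
    (\<forall>\<tau>\<in>{0<..<1}. (beta2_star N \<tau> = beta2_low N \<tau> \<and> beta1_sstar N \<tau> = beta1_up N \<tau>)
        \<longleftrightarrow> \<tau> = t1) \<and>
    (\<forall>\<tau>\<in>{0<..<1}. beta2_star N \<tau> - \<tau> * beta1_sstar N \<tau> > 2 \<longleftrightarrow> \<tau> < t1) \<and>
    (\<forall>\<tau>\<in>{0<..<1} - {t1}. 0 < beta1_sstar N \<tau> \<and> beta1_sstar N \<tau> < beta1_up N \<tau>) \<and>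
    \<comment> \<open>(ii)\<close>
    1/2 < t2 \<and> t2 < 1 / sqrt 2 \<and>
    (\<forall>\<tau>\<in>{0<..<1}. beta1_star N \<tau> - \<tau> * beta2_sstar N \<tau> = 2 * (real N + 1) \<longleftrightarrow> \<tau> = t2) \<and>
    (\<forall>\<tau>\<in>{0<..<1}. (beta1_star N \<tau> = beta1_low N \<tau> \<and> beta2_sstar N \<tau> = beta2_up N \<tau>)
        \<longleftrightarrow> \<tau> = t2) \<and>
    (\<forall>\<tau>\<in>{0<..<1}. beta1_star N \<tau> - \<tau> * beta2_sstar N \<tau> > 2 * (real N + 1) \<longleftrightarrow> \<tau> < t2) \<and>
    (\<forall>\<tau>\<in>{0<..<1} - {t2}. 0 < beta2_sstar N \<tau> \<and> beta2_sstar N \<tau> < beta2_up N \<tau>) \<and>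
    \<comment> \<open>ordering\<close>
    t2 < t1"
proof -
  define M where "M = real N + 1"
  have "0 < M" "1 < M" using assms by (simp_all add: M_def)
  obtain t1 where t1: "is_crossing_threshold 1 M t1"
    using crossing_threshold_exists[OF zero_less_one \<open>0 < M\<close>] .
  obtain t2 where t2: "is_crossing_threshold M 1 t2"
    using crossing_threshold_exists[OF \<open>0 < M\<close> zero_less_one] .
  have "t2 < t1" using crossing_threshold_order[OF zero_less_one \<open>1 < M\<close> t1 t2] .
  then show ?thesis
    using t1 t2 unfolding is_crossing_threshold_def mult_1_right
    unfolding betas_part_i betas_part_ii M_def[symmetric] by blast
qed

end
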